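(* Let $F:\mathbb{R}^n\rightrightarrows\mathbb{R}^n$ be a set-valued mapping with closed graph, and let $(\bar x,0)\in\mathrm{gph}\, F$. Assume that $F$ is semismooth$^*$ at $(\bar x,0)$ and that there are positive reals $\bar\delta$ and $\kappa$ such that for every $(x,y)\in\mathrm{gph}\, F$ with $\|(x,y)-(\bar x,0)\|\le\bar\delta$ there exists a pair of matrices $(A,B)\in\mathcal{A}_{\rm reg}F(x,y)$ with \[\|A^{-1}\|\,\|(A\,\vdots\,B)\|_F\le\kappa.\] Then $\bar x$ is an isolated solution of the inclusion $0\in F(x)$.
   Context: For a closed set $C\subset\mathbb{R}^p$ and $\bar z\in C$, the tangent cone is $T_C(\bar z)=\{w:\exists t_k\downarrow 0,\ w_k\to w \text{ with } \bar z+t_kw_k\in C\}$, and the regular normal cone is $\widehat N_C(\bar z)=\{z^*:\langle z^*,w\rangle\le 0\ \forall w\in T_C(\bar z)\}$. For a direction $w\in\mathbb{R}^p$, the directional limiting normal cone $N_C(\bar z;w)$ is the set of all $z^*$ for which there exist $t_k\downarrow 0$, $w_k\to w$ and $z_k^*\to z^*$ with $\bar z+t_kw_k\in C$ and $z_k^*\in\widehat N_C(\bar z+t_kw_k)$. The limiting normal cone is $N_C(\bar z)=N_C(\bar z;0)$. For $F:\mathbb{R}^n\rightrightarrows\mathbb{R}^m$ and $(\bar x,\bar y)\in\mathrm{gph}\, F$, the limiting coderivative is $D^*F(\bar x,\bar y)(v^* )=\{u^*:(u^*,-v^* )\in N_{\mathrm{gph}\, F}(\bar x,\bar y)\}$ and,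 for $(u,v)\in\mathbb{R}^n\times\mathbb{R}^m$, the directional limiting coderivative is $D^*F((\bar x,\bar y);(u,v))(v^* )=\{u^*:(u^*,-v^* )\in N_{\mathrm{gph}\, F}((\bar x,\bar y);(u,v))\}$. Graphs of coderivatives are written as $\mathrm{gph}\, D^*F(\bar x,\bar y)=\{(v^*,u^* ):u^*\in D^*F(\bar x,\bar y)(v^* )\}$ (and analogously for the directional one). $F$ is called semismooth$^*$ at $(\bar x,\bar y)\in\mathrm{gph}\, F$ if for all $(u,v)\in\mathbb{R}^n\times\mathbb{R}^m$ one has $\langle u^*,u\rangle=\langle v^*,v\rangle$ for all $(v^*,u^* )\in\mathrm{gph}\, D^*F((\bar x,\bar y);(u,v))$. For $F:\mathbb{R}^n\rightrightarrows\mathbb{R}^n$ and $(x,y)\in\mathrm{gph}\, F$, $\mathcal{A}F(x,y)$ denotes the set of all pairs $(A,B)$ of $n\times n$ matrices such that there exist $n$ elements $(y_i^*,x_i^* )\in\mathrm{gph}\, D^*F(x,y)$, $i=1,\dots,n$, with the $i$-th row of $A$ equal to $(x_i^* )^T$ and the $i$-th row of $B$ equal to $(y_i^* )^T$; and $\mathcal{A}_{\rm reg}F(x,y)=\{(A,B)\in\mathcal{A}F(x,y): A \text{ nonsingular}\}$. $\|(A\,\vdots\,B)\|_F$ is the Frobenius norm of the $n\times 2n$ matrix obtained by placing $A$ and $B$ side by side; $\|A^{-1}\|$ is the spectral norm. An isolated solution means there is a neighborhood of $\bar x$ containing no other solution. *)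

theory Defs
  imports "HOL-Analysis.Analysis"
begin

definition tangent_cone :: "'a::real_normed_vector set \<Rightarrow> 'a \<Rightarrow> 'a set" where
  "tangent_cone C z = {w. \<exists>t wk. (\<forall>k. t k > 0) \<and> t \<longlonglongrightarrow> 0 \<and> wk \<longlonglongrightarrow> w
       \<and> (\<forall>k. z + t k *\<^sub>R wk k \<in> C)}"

definition regular_normal_cone :: "'a::real_inner set \<Rightarrow> 'a \<Rightarrow> 'a set" where
  "regular_normal_cone C z = {zs. \<forall>w \<in> tangent_cone C z. inner zs w \<le> 0}"

definition dir_limiting_normal_cone :: "'a::real_inner set \<Rightarrow> 'a \<Rightarrow> 'a \<Rightarrow> 'a set" where
  "dir_limiting_normal_cone C z w = {zs. \<exists>t wk zk. (\<forall>k. t k > 0) \<and> t \<longlonglongrightarrow> 0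
       \<and> wk \<longlonglongrightarrow> w \<and> zk \<longlonglongrightarrow> zs
       \<and> (\<forall>k. z + t k *\<^sub>R wk k \<in> C \<and> zk k \<in> regular_normal_cone C (z + t k *\<^sub>R wk k))}"

definition limiting_normal_cone :: "'a::real_inner set \<Rightarrow> 'a \<Rightarrow> 'a set" where
  "limiting_normal_cone C z = dir_limiting_normal_cone C z 0"

definition gph :: "('a \<Rightarrow> 'b set) \<Rightarrow> ('a \<times> 'b) set" where
  "gph F = {(x, y). y \<in> F x}"

definition dir_coderiv ::
  "('a::real_inner \<Rightarrow> 'b::real_inner set) \<Rightarrow> 'a \<times> 'b \<Rightarrow> 'a \<times> 'b \<Rightarrow> 'b \<Rightarrow> 'a set" where
  "dir_coderiv F xy uv vs = {us. (us, - vs) \<in> dir_limiting_normal_cone (gph F) xy uv}"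

definition coderiv ::
  "('a::real_inner \<Rightarrow> 'b::real_inner set) \<Rightarrow> 'a \<times> 'b \<Rightarrow> 'b \<Rightarrow> 'a set" where
  "coderiv F xy vs = {us. (us, - vs) \<in> limiting_normal_cone (gph F) xy}"

definition gph_dir_coderiv ::
  "('a::real_inner \<Rightarrow> 'b::real_inner set) \<Rightarrow> 'a \<times> 'b \<Rightarrow> 'a \<times> 'b \<Rightarrow> ('b \<times> 'a) set" where
  "gph_dir_coderiv F xy uv = {(vs, us). us \<in> dir_coderiv F xy uv vs}"

definition gph_coderiv ::
  "('a::real_inner \<Rightarrow> 'b::real_inner set) \<Rightarrow> 'a \<times> 'b \<Rightarrow> ('b \<times> 'a) set" where
  "gph_coderiv F xy = {(vs, us). us \<in> coderiv F xy vs}"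

definition semismooth_star :: "('a::real_inner \<Rightarrow> 'b::real_inner set) \<Rightarrow> 'a \<times> 'b \<Rightarrow> bool" where
  "semismooth_star F xy \<longleftrightarrow> xy \<in> gph F \<and>
     (\<forall>u v. \<forall>(vs, us) \<in> gph_dir_coderiv F xy (u, v). inner us u = inner vs v)"

definition calA :: "(real^'n \<Rightarrow> (real^'n) set) \<Rightarrow> (real^'n) \<times> (real^'n)
     \<Rightarrow> ((real^'n^'n) \<times> (real^'n^'n)) set" where
  "calA F xy = {(A, B). \<exists>xs ys. (\<forall>i. (ys i, xs i) \<in> gph_coderiv F xy)
                 \<and> (\<forall>i. A $ i = xs i \<and> B $ i = ys i)}"

definition calA_reg :: "(real^'n \<Rightarrow> (real^'n) set) \<Rightarrow> (real^'n) \<times> (real^'n)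
     \<Rightarrow> ((real^'n^'n) \<times> (real^'n^'n)) set" where
  "calA_reg F xy = {(A, B). (A, B) \<in> calA F xy \<and> invertible A}"

definition frob_norm2 :: "real^'n^'n \<Rightarrow> real^'n^'n \<Rightarrow> real" where
  "frob_norm2 A B = sqrt (\<Sum>i\<in>UNIV. \<Sum>j\<in>UNIV. (A $ i $ j)\<^sup>2 + (B $ i $ j)\<^sup>2)"

definition spec_norm :: "real^'n^'n \<Rightarrow> real" where
  "spec_norm A = onorm (\<lambda>v. A *v v)"

end

theory Submission
  imports Defs
begin

(* If xbar were not isolated, there would be zeros xbar + t_k u_k of F with t_k -> 0 and
   norm u_k = 1. Since coderivatives are cones, the matrices (A_k, B_k) of the hypothesis may
   be scaled to unit Frobenius norm, and then the bound on the inverse of A_k gives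
   norm (A_k u_k) >= 1/kappa. Along a convergent subsequence, the rows of the limit (A, B)
   are directional limiting normals to gph F at (xbar, 0) in direction (u, 0), so
   semismoothness* forces A u = 0, a contradiction. *)

lemma matrix_inv_left:
  fixes A :: "real^'n^'n"
  assumes "invertible A"
  shows "matrix_inv A ** A = mat 1"
  using someI_ex[OF assms[unfolded invertible_def]] unfolding matrix_inv_def by blast

lemma norm_le_spec_norm_matrix_inv:
  fixes A :: "real^'n^'n"
  assumes "invertible A"
  shows "norm v \<le> spec_norm (matrix_inv A) * norm (A *v v)"
proof -
  have "v = matrix_inv A *v (A *v v)"
    by (simp add: matrix_vector_mul_assoc matrix_inv_left[OF assms])
  also have "norm \<dots> \<le> spec_norm (matrix_inv A) * norm (A *v v)"
    unfolding spec_norm_def by (rule onorm) simp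
  finally show ?thesis .
qed

lemma invertible_nonzero:
  fixes A :: "real^'n^'n"
  assumes "invertible A"
  shows "A \<noteq> 0"
proof
  assume "A = 0"
  then have "norm (axis i (1::real)) \<le> 0" for i :: 'n
    using norm_le_spec_norm_matrix_inv[OF assms, of "axis i 1"] by simp
  then show False
    by simp
qed

lemma tendsto_matrix_vector_mult:
  fixes A :: "'a \<Rightarrow> real^'n^'m"
  assumes "(A \<longlongrightarrow> A0) F" and "(u \<longlongrightarrow> u0) F"
  shows "((\<lambda>k. A k *v u k) \<longlongrightarrow> A0 *v u0) F"
proof (rule vec_tendstoI)
  fix i
  show "((\<lambda>k. (A k *v u k) $ i) \<longlongrightarrow> (A0 *v u0) $ i) F"
    unfolding matrix_vector_mul_component
    by (intro tendsto_inner tendsto_vec_nth assms)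
qed

lemma frob_norm2_commute: "frob_norm2 A B = frob_norm2 B A"
  unfolding frob_norm2_def by (simp add: add.commute)

lemma norm_le_frob_norm2:
  fixes A B :: "real^'n^'n"
  shows "norm A \<le> frob_norm2 A B"
proof -
  have "norm A = sqrt (\<Sum>i\<in>UNIV. \<Sum>j\<in>UNIV. (A $ i $ j)\<^sup>2)"
    by (simp add: norm_vec_def L2_set_def sum_nonneg)
  also have "\<dots> \<le> frob_norm2 A B"
    unfolding frob_norm2_def by (intro real_sqrt_le_mono sum_mono) auto
  finally show ?thesis .
qed

lemma frob_norm2_scaleR:
  fixes A B :: "real^'n^'n"
  assumes "c \<ge> 0"
  shows "frob_norm2 (c *\<^sub>R A) (c *\<^sub>R B) = c * frob_norm2 A B"
proof -
  have "(\<Sum>i\<in>UNIV. \<Sum>j\<in>UNIV. ((c *\<^sub>R A) $ i $ j)\<^sup>2 + ((c *\<^sub>R B) $ i $ j)\<^sup>2)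
      = c\<^sup>2 * (\<Sum>i\<in>UNIV. \<Sum>j\<in>UNIV. (A $ i $ j)\<^sup>2 + (B $ i $ j)\<^sup>2)"
    by (simp add: sum_distrib_left algebra_simps)
  then show ?thesis
    unfolding frob_norm2_def using assms by (simp add: real_sqrt_mult)
qed

lemma frob_norm2_pos:
  fixes A B :: "real^'n^'n"
  assumes "invertible A"
  shows "frob_norm2 A B > 0"
  using norm_le_frob_norm2[of A B] invertible_nonzero[OF assms] by (meson zero_less_norm_iff order_less_le_trans)

lemma regular_normal_cone_scaleR:
  assumes "c \<ge> 0" and "zs \<in> regular_normal_cone C z"
  shows "c *\<^sub>R zs \<in> regular_normal_cone C z"
  using assms unfolding regular_normal_cone_def by (auto simp: mult_nonneg_nonpos)

lemma dir_limiting_normal_cone_scaleR: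
  assumes "c \<ge> 0" and "zs \<in> dir_limiting_normal_cone C z w"
  shows "c *\<^sub>R zs \<in> dir_limiting_normal_cone C z w"
proof -
  obtain t wk zk where "\<forall>k. t k > 0" "t \<longlonglongrightarrow> 0" "wk \<longlonglongrightarrow> w" "zk \<longlonglongrightarrow> zs"
    and mem: "\<forall>k. z + t k *\<^sub>R wk k \<in> C \<and> zk k \<in> regular_normal_cone C (z + t k *\<^sub>R wk k)"
    using assms(2) unfolding dir_limiting_normal_cone_def by blast
  moreover have "(\<lambda>k. c *\<^sub>R zk k) \<longlonglongrightarrow> c *\<^sub>R zs"
    by (intro tendsto_scaleR tendsto_const \<open>zk \<longlonglongrightarrow> zs\<close>)
  moreover have "c *\<^sub>R zk k \<in> regular_normal_cone C (z + t k *\<^sub>R wk k)" for k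
    using mem regular_normal_cone_scaleR[OF assms(1)] by blast
  ultimately show ?thesis
    unfolding dir_limiting_normal_cone_def by blast
qed

lemma limiting_normal_cone_approx:
  assumes "zs \<in> limiting_normal_cone C z" and "e > 0"
  obtains h y where "norm h < e" "norm (y - zs) < e" "z + h \<in> C"
    "y \<in> regular_normal_cone C (z + h)"
proof -
  obtain t wk zk where t: "\<forall>k. t k > 0" "t \<longlonglongrightarrow> 0" "wk \<longlonglongrightarrow> 0" "zk \<longlonglongrightarrow> zs"
    and mem: "\<forall>k. z + t k *\<^sub>R wk k \<in> C \<and> zk k \<in> regular_normal_cone C (z + t k *\<^sub>R wk k)"
    using assms(1) unfolding limiting_normal_cone_def dir_limiting_normal_cone_def by blast
  have "(\<lambda>k. t k *\<^sub>R wk k) \<longlonglongrightarrow> 0"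
    using tendsto_scaleR[OF t(2,3)] by simp
  then have "eventually (\<lambda>k. norm (t k *\<^sub>R wk k) < e) sequentially"
    using order_tendstoD(2)[OF tendsto_norm_zero assms(2)] by blast
  moreover have "eventually (\<lambda>k. norm (zk k - zs) < e) sequentially"
    using order_tendstoD(2)[OF tendsto_norm_zero[OF LIM_zero[OF t(4)]] assms(2)] by blast
  ultimately obtain k where "norm (t k *\<^sub>R wk k) < e" "norm (zk k - zs) < e"
    using eventually_happens'[OF sequentially_bot eventually_conj] by blast
  then show ?thesis
    using mem that by blast
qed

text \<open>Diagonal argument: q_k is replaced by a regular normal at a point within distance
  t_k/(k+1) of z + t_k d_k, so that the perturbation of the direction d_k, which is scaled
  by 1/t_k, still vanishes.\<close>

lemma dir_limiting_normal_cone_diagonal: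
  assumes t: "\<And>k. t k > 0" "t \<longlonglongrightarrow> 0" and d: "d \<longlonglongrightarrow> w"
    and q: "\<And>k. q k \<in> limiting_normal_cone C (z + t k *\<^sub>R d k)" "q \<longlonglongrightarrow> zs"
  shows "zs \<in> dir_limiting_normal_cone C z w"
proof -
  have "\<exists>h y. norm h < t k / Suc k \<and> norm (y - q k) < t k / Suc k
      \<and> z + t k *\<^sub>R d k + h \<in> C \<and> y \<in> regular_normal_cone C (z + t k *\<^sub>R d k + h)" for k
  proof -
    have "t k / Suc k > 0"
      using t(1)[of k] by simp
    then show ?thesis
      by (rule limiting_normal_cone_approx[OF q(1)[of k]]) blast
  qed
  then obtain h y where h: "\<And>k. norm (h k) < t k / Suc k" "\<And>k. norm (y k - q k) < t k / Suc k"
    and mem: "\<And>k. z + t k *\<^sub>R d k + h k \<in> C"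
      "\<And>k. y k \<in> regular_normal_cone C (z + t k *\<^sub>R d k + h k)"
    by metis
  define W where "W k = d k + (1 / t k) *\<^sub>R h k" for k
  have point: "z + t k *\<^sub>R W k = z + t k *\<^sub>R d k + h k" for k
    using t(1)[of k] by (simp add: W_def algebra_simps)
  have "(\<lambda>k. (1 / t k) *\<^sub>R h k) \<longlonglongrightarrow> 0"
  proof (rule tendsto_norm_zero_cancel, rule Lim_null_comparison)
    show "\<forall>\<^sub>F k in sequentially. norm (norm ((1 / t k) *\<^sub>R h k)) \<le> 1 / real (Suc k)"
      using h(1) t(1) by (intro always_eventually) (simp add: divide_simps less_imp_le)
  qed (rule LIMSEQ_inverse_real_of_nat[unfolded inverse_eq_divide])
  then have "W \<longlonglongrightarrow> w"
    unfolding W_def using tendsto_add[OF d] by fastforce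
  moreover have "(\<lambda>k. y k - q k) \<longlonglongrightarrow> 0"
  proof (rule tendsto_norm_zero_cancel, rule Lim_null_comparison)
    have "norm (y k - q k) \<le> t k" for k
    proof -
      have "t k / Suc k \<le> t k"
        using frac_le[of "t k" "t k" 1 "Suc k"] t(1)[of k] by simp
      then show ?thesis
        using h(2)[of k] by linarith
    qed
    then show "\<forall>\<^sub>F k in sequentially. norm (norm (y k - q k)) \<le> t k"
      by (intro always_eventually allI) simp
  qed (rule t(2))
  then have "y \<longlonglongrightarrow> zs"
    using tendsto_add[OF _ q(2)] by fastforce
  ultimately show ?thesis
    using t mem unfolding dir_limiting_normal_cone_def point[symmetric] by blast
qed

lemma semismooth_star_inner_eq:
  assumes "semismooth_star F xy"
    and "(us, - vs) \<in> dir_limiting_normal_cone (gph F) xy (u, v)"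
  shows "inner us u = inner vs v"
  using assms unfolding semismooth_star_def gph_dir_coderiv_def dir_coderiv_def by auto

lemma mem_calA_iff:
  "(A, B) \<in> calA F xy \<longleftrightarrow> (\<forall>i. (A $ i, - (B $ i)) \<in> limiting_normal_cone (gph F) xy)"
  unfolding calA_def gph_coderiv_def coderiv_def by fastforce

lemma calA_scaleR:
  assumes "c \<ge> 0" and "(A, B) \<in> calA F xy"
  shows "(c *\<^sub>R A, c *\<^sub>R B) \<in> calA F xy"
proof -
  have "c *\<^sub>R (A $ i, - (B $ i)) \<in> limiting_normal_cone (gph F) xy" for i
    using dir_limiting_normal_cone_scaleR[OF assms(1)] assms(2)
    unfolding mem_calA_iff limiting_normal_cone_def by blast
  then show ?thesis
    unfolding mem_calA_iff by simp
qed

lemma calA_reg_normalize: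
  assumes AB: "(A, B) \<in> calA_reg F xy"
    and bound: "spec_norm (matrix_inv A) * frob_norm2 A B \<le> kappa"
  obtains A' B' where "(A', B') \<in> calA F xy" "frob_norm2 A' B' = 1"
    "\<And>u. norm u \<le> kappa * norm (A' *v u)"
proof
  have inv: "invertible A" and "(A, B) \<in> calA F xy"
    using AB by (auto simp: calA_reg_def)
  define c where "c = 1 / frob_norm2 A B"
  have c: "c > 0" "c * frob_norm2 A B = 1"
    using frob_norm2_pos[OF inv, of B] by (auto simp: c_def)
  show "(c *\<^sub>R A, c *\<^sub>R B) \<in> calA F xy"
    using calA_scaleR[OF _ \<open>(A, B) \<in> calA F xy\<close>] c by simp
  show "frob_norm2 (c *\<^sub>R A) (c *\<^sub>R B) = 1"
    using frob_norm2_scaleR[of c A B] c by simp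
  fix u
  have "frob_norm2 A B * norm u \<le> frob_norm2 A B * (spec_norm (matrix_inv A) * norm (A *v u))"
    using norm_le_spec_norm_matrix_inv[OF inv] frob_norm2_pos[OF inv] by simp
  also have "\<dots> = (spec_norm (matrix_inv A) * frob_norm2 A B) * norm (A *v u)"
    by (simp only: mult_ac)
  also have "\<dots> \<le> kappa * norm (A *v u)"
    using bound by (rule mult_right_mono) simp
  finally have "c * (frob_norm2 A B * norm u) \<le> c * (kappa * norm (A *v u))"
    using c(1) by (intro mult_left_mono) auto
  then have "norm u \<le> c * (kappa * norm (A *v u))"
    using c(2) by (simp add: mult.assoc[symmetric])
  then show "norm u \<le> kappa * norm ((c *\<^sub>R A) *v u)"
    using c by (simp add: scaleR_matrix_vector_assoc[symmetric] mult.left_commute)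
qed

lemma semismooth_star_limit_kernel:
  fixes F :: "real^'n \<Rightarrow> (real^'n) set"
  assumes ss: "semismooth_star F (xbar, ybar)"
    and t: "\<And>k. t k > 0" "t \<longlonglongrightarrow> 0" and u: "u \<longlonglongrightarrow> u0"
    and AB: "\<And>k. (A k, B k) \<in> calA F (xbar + t k *\<^sub>R u k, ybar)"
    and A: "A \<longlonglongrightarrow> A0" and B: "B \<longlonglongrightarrow> B0"
  shows "A0 *v u0 = 0"
proof -
  have "inner (A0 $ i) u0 = 0" for i
  proof -
    have "(A0 $ i, - (B0 $ i)) \<in> dir_limiting_normal_cone (gph F) (xbar, ybar) (u0, 0)"
    proof (rule dir_limiting_normal_cone_diagonal[OF t])
      show "(\<lambda>k. (u k, 0)) \<longlonglongrightarrow> (u0, 0)"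
        by (intro tendsto_Pair u tendsto_const)
      show "(A k $ i, - (B k $ i)) \<in> limiting_normal_cone (gph F) ((xbar, ybar) + t k *\<^sub>R (u k, 0))"
        for k using AB[of k] by (simp add: mem_calA_iff)
      show "(\<lambda>k. (A k $ i, - (B k $ i))) \<longlonglongrightarrow> (A0 $ i, - (B0 $ i))"
        by (intro tendsto_Pair tendsto_minus tendsto_vec_nth A B)
    qed
    then show ?thesis
      using semismooth_star_inner_eq[OF ss] by fastforce
  qed
  then show ?thesis
    by (simp add: vec_eq_iff matrix_vector_mul_component)
qed

lemma islimpt_directional_sequence:
  fixes x :: "'a::real_normed_vector"
  assumes "x islimpt S" and "e > 0"
  obtains t u where "\<And>k. t k > 0" "\<And>k. t k < e" "t \<longlonglongrightarrow> 0"
    "\<And>k. norm (u k) = 1" "\<And>k. x + t k *\<^sub>R u k \<in> S"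
proof -
  have "\<exists>y\<in>S. y \<noteq> x \<and> dist y x < e / Suc k" for k
    using assms unfolding islimpt_approachable by simp
  then obtain y where y: "\<And>k. y k \<in> S" "\<And>k. y k \<noteq> x" "\<And>k. dist (y k) x < e / Suc k"
    by metis
  define t where "t k = norm (y k - x)" for k
  define u where "u k = (1 / t k) *\<^sub>R (y k - x)" for k
  have t_pos: "t k > 0" for k
    using y(2) by (simp add: t_def)
  show thesis
  proof
    show "t k < e" for k
      using y(3)[of k] frac_le[of e e 1 "Suc k"] assms(2) unfolding t_def dist_norm by simp
    show "t \<longlonglongrightarrow> 0"
    proof (rule Lim_null_comparison)
      show "\<forall>\<^sub>F k in sequentially. norm (t k) \<le> e * (1 / real (Suc k))"
        using y(3) by (intro always_eventually allI) (simp add: t_def dist_norm less_imp_le)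
      show "(\<lambda>k. e * (1 / real (Suc k))) \<longlonglongrightarrow> 0"
        using tendsto_mult_right_zero[OF LIMSEQ_inverse_real_of_nat] by (simp add: inverse_eq_divide)
    qed
    show "norm (u k) = 1" "x + t k *\<^sub>R u k \<in> S" for k
      using t_pos[of k] y(1) by (auto simp: u_def t_def)
  qed (rule t_pos)
qed

lemma semismooth_star_normalized_calA_not_bounded_below:
  fixes F :: "real^'n \<Rightarrow> (real^'n) set"
  assumes ss: "semismooth_star F (xbar, ybar)"
    and t: "\<And>k. t k > 0" "t \<longlonglongrightarrow> 0" and u: "\<And>k. norm (u k) = 1"
    and AB: "\<And>k. (A k, B k) \<in> calA F (xbar + t k *\<^sub>R u k, ybar)"
    and frob: "\<And>k. frob_norm2 (A k) (B k) = 1"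
    and "e > 0"
  shows "\<exists>k. norm (A k *v u k) < e"
proof -
  have "norm (u k, A k, B k) \<le> 3" for k
  proof -
    have "norm (A k) \<le> 1" "norm (B k) \<le> 1"
      using norm_le_frob_norm2[of "A k" "B k"] norm_le_frob_norm2[of "B k" "A k"]
        frob_norm2_commute[of "A k" "B k"] frob[of k] by simp_all
    moreover have "norm (u k, A k, B k) \<le> norm (u k) + (norm (A k) + norm (B k))"
      by (meson add_left_mono norm_Pair_le order_trans)
    ultimately show ?thesis
      using u[of k] by linarith
  qed
  then have "bounded (range (\<lambda>k. (u k, A k, B k)))"
    unfolding bounded_iff by blast
  then obtain r l where r: "strict_mono r"
    and lim: "(\<lambda>k. (u (r k), A (r k), B (r k))) \<longlonglongrightarrow> l"
    using bounded_imp_convergent_subsequence unfolding comp_def by blast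
  note lims = tendsto_fst[OF lim] tendsto_fst[OF tendsto_snd[OF lim]] tendsto_snd[OF tendsto_snd[OF lim]]
  have tr: "t (r k) > 0" for k
    by (rule t(1))
  have "(\<lambda>k. t (r k)) \<longlonglongrightarrow> 0"
    using LIMSEQ_subseq_LIMSEQ[OF t(2) r] unfolding comp_def .
  from semismooth_star_limit_kernel[OF ss tr this lims(1)[simplified] AB lims(2,3)[simplified]]
  have "(\<lambda>k. A (r k) *v u (r k)) \<longlonglongrightarrow> 0"
    using tendsto_matrix_vector_mult[OF lims(2,1)] by simp
  then have "eventually (\<lambda>k. norm (A (r k) *v u (r k)) < e) sequentially"
    using order_tendstoD(2)[OF tendsto_norm_zero \<open>e > 0\<close>] by blast
  then show ?thesis
    using eventually_happens'[OF sequentially_bot] by blast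
qed

theorem corollary3p4:
  fixes F :: "real^'n \<Rightarrow> (real^'n) set" and xbar :: "real^'n"
    and delta kappa :: real
  assumes "closed (gph F)"
    and "(xbar, 0) \<in> gph F"
    and "semismooth_star F (xbar, 0)"
    and "delta > 0" and "kappa > 0"
    and "\<forall>x y. (x, y) \<in> gph F \<and> norm ((x, y) - (xbar, 0)) \<le> delta \<longrightarrow>
           (\<exists>A B. (A, B) \<in> calA_reg F (x, y) \<and>
                  spec_norm (matrix_inv A) * frob_norm2 A B \<le> kappa)"
  shows "\<exists>r>0. \<forall>x. dist x xbar < r \<and> 0 \<in> F x \<longrightarrow> x = xbar"
proof (rule ccontr)
  assume "\<not> ?thesis"
  then have "xbar islimpt {x. 0 \<in> F x}"
    unfolding islimpt_approachable by auto
  then obtain t u where t: "\<And>k. t k > 0" "\<And>k. t k < delta" "t \<longlonglongrightarrow> 0"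
    and u: "\<And>k. norm (u k) = 1" "\<And>k. xbar + t k *\<^sub>R u k \<in> {x. 0 \<in> F x}"
    using islimpt_directional_sequence \<open>delta > 0\<close> by blast
  have "\<exists>A B. (A, B) \<in> calA F (xbar + t k *\<^sub>R u k, 0) \<and> frob_norm2 A B = 1
      \<and> (\<forall>v. norm v \<le> kappa * norm (A *v v))" for k
  proof -
    have "(xbar + t k *\<^sub>R u k, 0) \<in> gph F \<and> norm ((xbar + t k *\<^sub>R u k, 0) - (xbar, 0)) \<le> delta"
      using t(1,2)[of k] u[of k] by (simp add: gph_def norm_Pair less_imp_le)
    then obtain A B where "(A, B) \<in> calA_reg F (xbar + t k *\<^sub>R u k, 0)"
      and "spec_norm (matrix_inv A) * frob_norm2 A B \<le> kappa"
      using assms(6) by blast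
    then show ?thesis
      by (rule calA_reg_normalize) blast
  qed
  then obtain A B where AB: "\<And>k. (A k, B k) \<in> calA F (xbar + t k *\<^sub>R u k, 0)"
    "\<And>k. frob_norm2 (A k) (B k) = 1" "\<And>k v. norm v \<le> kappa * norm (A k *v v)"
    by metis
  have "1 / kappa > 0"
    using \<open>kappa > 0\<close> by simp
  then obtain k where "norm (A k *v u k) < 1 / kappa"
    using semismooth_star_normalized_calA_not_bounded_below[OF assms(3) t(1,3) u(1) AB(1,2)] by blast
  then have "kappa * norm (A k *v u k) < 1"
    using \<open>kappa > 0\<close> by (simp add: pos_less_divide_eq mult.commute)
  with AB(3)[of "u k" k] u(1)[of k] show False
    by simp
qed

end
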